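(* Let $p$ be an odd prime and $d$ a positive integer. Then $L(d+p^2)=L(d)+L(p^2+1)$.
   Context: For an odd prime $p$ and a positive integer $d$, define $$L(d)=\max_{1\le j\le p-1}\ \sum_{i=j}^{p-1}\left(\left\lfloor \frac{id}{p}\right\rfloor-\left\lfloor \frac{id}{p}-\left(1-\frac1p\right)\frac{jd}{p}\right\rfloor\right).$$ *)

theory Defs
  imports Complex_Main "HOL-Computational_Algebra.Primes"
begin

definition L :: "nat \<Rightarrow> nat \<Rightarrow> int" where
  "L p d = Max ((\<lambda>j. \<Sum>i=j..p-1.
        (\<lfloor>real (i*d) / real p\<rfloor>
         - \<lfloor>real (i*d) / real p - (1 - 1 / real p) * (real (j*d) / real p)\<rfloor>))
      ` {1..p-1})"

end

theory Submission
  imports Defs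
begin

text \<open>
  Since floor(i d/p - (1 - 1/p) j d/p) = floor((d (i - j) + floor(j d/p))/p), the sum in the
  definition of L is a sum Lsum p d j of integer quotients. Replacing d by d + p^2 adds
  exactly (p - 1) j (p - j) to it, and Lsum p 1 = 0, so L(p^2 + 1) is the maximum of
  (p - 1) j (p - j), attained at j = (p - 1)/2 and j = (p + 1)/2. The theorem follows because
  j \<mapsto> Lsum p d j increases up to (p - 1)/2 and decreases from (p + 1)/2 on: both summands
  of Lsum p (d + p^2) j are then maximised by the same j.
\<close>

definition Lsum :: "nat \<Rightarrow> nat \<Rightarrow> nat \<Rightarrow> int" where
  "Lsum p d j = (\<Sum>x<p-j. int ((x+j)*d div p) - int ((d*x + j*d div p) div p))"

subsection \<open>L as a maximum of sums of integer quotients\<close>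

lemma floor_L_term_eq:
  fixes p d i j :: nat
  assumes "p > 0" "j \<le> i"
  shows "\<lfloor>real (i*d) / real p - (1 - 1 / real p) * (real (j*d) / real p)\<rfloor>
         = int ((d*(i-j) + j*d div p) div p)"
proof -
  have "real (i*d) / real p - (1 - 1 / real p) * (real (j*d) / real p)
        = real (d*(p*(i-j)+j)) / real (p*p)"
    using assms by (simp add: of_nat_diff field_simps)
  hence "\<lfloor>real (i*d) / real p - (1 - 1 / real p) * (real (j*d) / real p)\<rfloor>
        = int (d*(p*(i-j)+j) div (p*p))"
    by (metis floor_divide_of_nat_eq of_int_of_nat_eq)
  also have "d*(p*(i-j)+j) = p*(d*(i-j)) + j*d"
    by (simp add: algebra_simps)
  also have "(p*(d*(i-j)) + j*d) div (p*p) = (d*(i-j) + j*d div p) div p"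
    using assms by (simp add: div_mult2_eq)
  finally show ?thesis .
qed

lemma L_term_sum_eq_Lsum:
  fixes p d j :: nat
  assumes "p > 0" "j \<le> p - 1"
  shows "(\<Sum>i=j..p-1. (\<lfloor>real (i*d) / real p\<rfloor>
         - \<lfloor>real (i*d) / real p - (1 - 1 / real p) * (real (j*d) / real p)\<rfloor>)) = Lsum p d j"
proof -
  have "(\<Sum>i=j..p-1. (\<lfloor>real (i*d) / real p\<rfloor>
         - \<lfloor>real (i*d) / real p - (1 - 1 / real p) * (real (j*d) / real p)\<rfloor>))
      = (\<Sum>i=j..p-1. int (i*d div p) - int ((d*(i-j) + j*d div p) div p))"
  proof (intro sum.cong refl)
    fix i assume "i \<in> {j..p-1}"
    moreover have "\<lfloor>real (i*d) / real p\<rfloor> = int (i*d div p)"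
      by (metis floor_divide_of_nat_eq of_int_of_nat_eq)
    ultimately show "\<lfloor>real (i*d) / real p\<rfloor>
         - \<lfloor>real (i*d) / real p - (1 - 1 / real p) * (real (j*d) / real p)\<rfloor>
        = int (i*d div p) - int ((d*(i-j) + j*d div p) div p)"
      using floor_L_term_eq[OF assms(1), of j i d] by simp
  qed
  also have "\<dots> = (\<Sum>x<p-j. int ((x+j)*d div p) - int ((d*x + j*d div p) div p))"
  proof -
    have "{j..p-1} = (\<lambda>x. x+j) ` {..<p-j}"
    proof (intro set_eqI iffI)
      fix i assume "i \<in> {j..p-1}"
      thus "i \<in> (\<lambda>x. x+j) ` {..<p-j}"
        using assms by (auto simp: image_iff intro!: bexI[of _ "i - j"])
    qed (use assms in auto)
    thus ?thesis by (simp add: sum.reindex)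
  qed
  finally show ?thesis by (simp add: Lsum_def)
qed

lemma L_eq_Max_Lsum:
  assumes "p > 0"
  shows "L p d = Max (Lsum p d ` {1..p-1})"
  unfolding L_def using L_term_sum_eq_Lsum[OF assms]
  by (intro arg_cong[where f = Max] image_cong) auto

lemma L_eq_Lsum_at_maximiser:
  assumes "p > 0" "j0 \<in> {1..p-1}" "\<And>j. j \<in> {1..p-1} \<Longrightarrow> Lsum p d j \<le> Lsum p d j0"
  shows "L p d = Lsum p d j0"
  unfolding L_eq_Max_Lsum[OF assms(1)] using assms(2,3) by (intro Max_eqI) auto

subsection \<open>Adding p^2 to d\<close>

lemma Lsum_add_p_square:
  fixes p d j :: nat
  assumes "p > 0" "j < p"
  shows "Lsum p (d + p^2) j = Lsum p d j + int ((p-1)*j*(p-j))"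
proof -
  have "int ((x+j)*(d+p^2) div p) - int (((d+p^2)*x + j*(d+p^2) div p) div p)
      = int ((x+j)*d div p) - int ((d*x + j*d div p) div p) + int ((p-1)*j)" for x
  proof -
    have "(x+j)*(d+p^2) = (x+j)*d + p*(p*(x+j))"
      by (simp add: algebra_simps power2_eq_square)
    hence A: "(x+j)*(d+p^2) div p = (x+j)*d div p + p*(x+j)"
      using assms(1) by simp
    have "j*(d+p^2) = j*d + p*(p*j)"
      by (simp add: algebra_simps power2_eq_square)
    hence "j*(d+p^2) div p = j*d div p + p*j"
      using assms(1) by simp
    hence "(d+p^2)*x + j*(d+p^2) div p = (d*x + j*d div p) + p*(p*x+j)"
      by (simp add: algebra_simps power2_eq_square)
    hence B: "((d+p^2)*x + j*(d+p^2) div p) div p = (d*x + j*d div p) div p + (p*x + j)"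
      using assms(1) by simp
    show ?thesis
      unfolding A B using assms(1) by (simp add: algebra_simps of_nat_diff)
  qed
  hence "Lsum p (d + p^2) j = Lsum p d j + (\<Sum>x<p-j. int ((p-1)*j))"
    unfolding Lsum_def by (simp add: sum.distrib)
  also have "(\<Sum>x<p-j. int ((p-1)*j)) = int ((p-1)*j*(p-j))"
    by (metis sum_constant card_lessThan of_nat_mult mult.commute)
  finally show ?thesis .
qed

lemma Lsum_one: "Lsum p 1 j = 0"
  unfolding Lsum_def by (intro sum.neutral) auto

lemma mult_complement_le_middle:
  fixes p m j j0 :: nat
  assumes "p = 2*m + 1" "j0 \<in> {m, Suc m}" "j \<le> p"
  shows "(p-1)*j*(p-j) \<le> (p-1)*j0*(p-j0)"
proof -
  have "(int j - int m) * (int j - int m - 1) \<ge> 0"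
    by (cases "j \<le> m") (auto intro: mult_nonpos_nonpos mult_nonneg_nonneg)
  hence "int j * (int p - int j) \<le> int j0 * (int p - int j0)"
    using assms(1,2) by (auto simp: algebra_simps)
  moreover have "int (j*(p-j)) = int j * (int p - int j)" "int (j0*(p-j0)) = int j0 * (int p - int j0)"
    using assms by (auto simp: of_nat_diff)
  ultimately have "j*(p-j) \<le> j0*(p-j0)"
    by linarith
  thus ?thesis
    by (simp add: mult.assoc)
qed

subsection \<open>Unimodality of Lsum\<close>

lemma Lsum_Suc_eq:
  fixes p d j :: nat
  assumes "Suc j < p"
  shows "Lsum p d (Suc j) = Lsum p d j + int ((d*(p - Suc j) + j*d div p) div p)
           + (\<Sum>x<p - Suc j. int ((d*x + j*d div p) div p))
           - (\<Sum>x<p - Suc j. int ((d*x + Suc j*d div p) div p)) - int (j*d div p)"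
proof -
  have pj: "p - j = Suc (p - Suc j)"
    using assms by simp
  have "(\<Sum>x<p-j. int ((x+j)*d div p))
      = int (j*d div p) + (\<Sum>x<p - Suc j. int ((x + Suc j)*d div p))"
    unfolding pj by (simp only: sum.lessThan_Suc_shift) simp
  moreover have "(\<Sum>x<p-j. int ((d*x + j*d div p) div p))
      = (\<Sum>x<p - Suc j. int ((d*x + j*d div p) div p)) + int ((d*(p - Suc j) + j*d div p) div p)"
    unfolding pj by (simp only: sum.lessThan_Suc)
  ultimately show ?thesis
    unfolding Lsum_def sum_subtractf by linarith
qed

lemma int_div_bounds:
  fixes n p :: nat
  assumes "p > 0"
  shows "int p * int (n div p) \<le> int n" "int n < int p * int (n div p) + int p"
proof -
  have "p * (n div p) + n mod p = n"
    by simp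
  hence "int p * int (n div p) + int (n mod p) = int n"
    by (metis of_nat_add of_nat_mult)
  moreover have "int (n mod p) < int p"
    using assms by simp
  ultimately show "int p * int (n div p) \<le> int n" "int n < int p * int (n div p) + int p"
    by linarith+
qed

lemma card_affine_multiples_le_1:
  fixes p d c X :: nat
  assumes "prime p" "\<not> p dvd d" "X \<le> p"
  shows "card ({..<X} \<inter> {x. p dvd d*x + c}) \<le> 1"
proof -
  have False if "u < v" "v < X" "p dvd d*u + c" "p dvd d*v + c" for u v
  proof -
    have "p dvd (d*v + c) - (d*u + c)"
      using that by (intro dvd_diff_nat)
    also have "(d*v + c) - (d*u + c) = d*(v-u)"
      by (simp add: diff_mult_distrib2)
    finally have "p dvd v - u"
      using assms prime_dvd_mult_iff by blast
    moreover have "0 < v - u" "v - u < p"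
      using that assms(3) by auto
    ultimately show False
      using nat_dvd_not_less by blast
  qed
  hence "\<forall>u \<in> {..<X} \<inter> {x. p dvd d*x + c}. \<forall>v \<in> {..<X} \<inter> {x. p dvd d*x + c}. u = v"
    by (metis IntD1 IntD2 lessThan_iff linorder_neqE_nat mem_Collect_eq)
  thus ?thesis
    using card_le_Suc0_iff_eq[of "{..<X} \<inter> {x. p dvd d*x + c}"] by simp
qed

text \<open>Raising the offset by one moves at most one of the p-periodic quotients, because d is
  invertible mod p.\<close>
lemma sum_div_offset_increase_le:
  fixes p d z z' X :: nat
  assumes "prime p" "\<not> p dvd d" "X \<le> p" "z \<le> z'"
  shows "(\<Sum>x<X. int ((d*x + z') div p)) - (\<Sum>x<X. int ((d*x + z) div p)) \<le> int z' - int z"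
  using assms(4)
proof (induction z' rule: dec_induct)
  case (step n)
  have "int ((d*x + Suc n) div p) - int ((d*x + n) div p) = of_bool (p dvd d*x + Suc n)" for x
    using div_Suc[of "d*x+n" p] by (auto simp: dvd_eq_mod_eq_0)
  hence "(\<Sum>x<X. int ((d*x + Suc n) div p)) - (\<Sum>x<X. int ((d*x + n) div p))
      = int (card ({..<X} \<inter> {x. p dvd d*x + Suc n}))"
    by (simp flip: sum_subtractf)
  thus ?case
    using step card_affine_multiples_le_1[OF assms(1-3), of "Suc n"] by simp
qed simp

lemma floor_jump_bound:
  fixes p j e G P :: int
  assumes "j \<ge> 1" "P \<ge> 2" "p = P + 2*j + 1"
    and "j*e < p*G" "p*G \<le> (j+1)*e" "G \<ge> 1"
  shows "P*(e-1) \<ge> j - G + 1"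
proof -
  have "(2*j+3)*G \<le> p*G"
    using assms by (intro mult_right_mono) auto
  hence "(j+1)*(2*G) < (j+1)*e"
    using assms(5,6) by (simp add: algebra_simps)
  hence e2: "e > 2*G"
    using assms(1) by (simp add: mult_less_cancel_left_pos)
  have h: "G*(P+1) > j*(e-2*G)"
    using assms by (simp add: algebra_simps)
  show ?thesis
  proof (cases "j < G")
    case True
    have "P*(e-1) \<ge> 0"
      using assms e2 by simp
    thus ?thesis using True by simp
  next
    case False
    have "P*(e-1) \<ge> P*(2*G)"
      using assms e2 by (intro mult_left_mono) auto
    moreover have "j*(e-2*G) \<ge> j*1"
      using assms e2 by (intro mult_left_mono) auto
    ultimately show ?thesis
      using h False by (simp add: algebra_simps)
  qed
qed

text \<open>Here g and g' play the roles of floor(j e/p) and floor((j + 1) e/p). For e \<ge> p the slack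
  e (X - j) \<ge> 2 e absorbs X (g' - g); otherwise g' - g \<le> 1, and a jump is handled by
  floor_jump_bound.\<close>
lemma floor_multiple_increment_bound:
  fixes p j e g g' X :: int
  assumes j1: "j \<ge> 1" and jp: "2*j+3 \<le> p" and X: "X = p-1-j" and e0: "e \<ge> 0"
    and g1: "p*g \<le> j*e" and g2: "j*e < p*g + p"
    and h1: "p*g' \<le> (j+1)*e" and h2: "(j+1)*e < p*g' + p"
  shows "e*X + (X+1)*g \<ge> e*j + X*g'"
proof -
  have p0: "p > 0" and X0: "X \<ge> 0" and Xj: "X - j \<ge> 2"
    using j1 jp X by simp_all
  have pM: "p*(g'-g) \<le> e + p - 1"
    using g2 h1 by (simp add: algebra_simps)
  have "p*(-1) < p*g"
    using g2 j1 e0 by (smt (verit) mult_nonneg_nonneg)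
  hence "-1 < g"
    using p0 by (subst (asm) mult_less_cancel_left_pos) auto
  hence g0: "g \<ge> 0"
    by simp
  have "p*g < p*(g'+1)"
    using g1 h2 e0 by (simp add: algebra_simps)
  hence gle: "g \<le> g'"
    using p0 by (simp add: mult_less_cancel_left_pos)
  show ?thesis
  proof (cases "e \<ge> p")
    case True
    have "e*(X-j) \<ge> e*2"
      using Xj e0 by (intro mult_left_mono) auto
    hence "e*X - e*j \<ge> 2*e"
      by (simp add: right_diff_distrib)
    hence "e*X - X - j*e - 1 \<ge> 0"
      using True X j1 jp by (simp add: mult.commute)
    hence "(p-1)*(e*X - X - j*e - 1) \<ge> 0"
      using p0 by (intro mult_nonneg_nonneg) auto
    moreover have "X*(p*(g'-g)) \<le> X*(e+p-1)"
      using pM X0 by (intro mult_left_mono) auto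
    ultimately have "p*(X*(e - (g'-g))) \<ge> p*(e*j - g)"
      using g2 by (simp add: algebra_simps)
    hence "X*(e - (g'-g)) \<ge> e*j - g"
      using p0 by (simp add: mult_le_cancel_left_pos)
    thus ?thesis by (simp add: algebra_simps)
  next
    case False
    have "p*(g'-g) < p*2"
      using pM False by simp
    hence "g'-g < 2"
      using p0 by (simp add: mult_less_cancel_left_pos)
    hence "g' = g \<or> g' = g+1"
      using gle by auto
    thus ?thesis
    proof
      assume "g' = g"
      moreover have "e*X \<ge> e*j"
        using X jp e0 by (intro mult_left_mono) auto
      ultimately show ?thesis
        using g0 by (simp add: algebra_simps)
    next
      assume gg: "g' = g+1"
      have "(X-j)*(e-1) \<ge> j - g' + 1"
        by (rule floor_jump_bound[of j "X-j" p e g'])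
          (use j1 jp X g2 h1 gg g0 in \<open>auto simp: algebra_simps\<close>)
      thus ?thesis
        using gg by (simp add: algebra_simps)
    qed
  qed
qed

lemma Lsum_le_Suc_of_not_dvd:
  fixes p d j :: nat
  assumes "prime p" "\<not> p dvd d" "2*j+3 \<le> p"
  shows "Lsum p d j \<le> Lsum p d (Suc j)"
proof -
  define q where "q = j*d div p"
  define q' where "q' = Suc j*d div p"
  define X where "X = p - Suc j"
  have "q \<le> q'"
    unfolding q_def q'_def by (intro div_le_mono) simp
  hence "(\<Sum>x<X. int ((d*x + q') div p)) - (\<Sum>x<X. int ((d*x + q) div p)) \<le> int q' - int q"
    using sum_div_offset_increase_le[OF assms(1,2)] unfolding X_def by simp
  moreover have "d * Suc j \<le> d * X"
    unfolding X_def using assms by (intro mult_le_mono2) simp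
  hence "q' \<le> (d*X + q) div p"
    unfolding q'_def by (intro div_le_mono) (simp add: mult.commute)
  ultimately have "int ((d*X + q) div p) + (\<Sum>x<X. int ((d*x + q) div p))
       - (\<Sum>x<X. int ((d*x + q') div p)) - int q \<ge> 0"
    by linarith
  thus ?thesis
    using Lsum_Suc_eq[of j p d] assms unfolding q_def q'_def X_def by simp
qed

lemma Lsum_le_Suc_of_dvd:
  fixes p d j :: nat
  assumes "p dvd d" "1 \<le> j" "2*j+3 \<le> p"
  shows "Lsum p d j \<le> Lsum p d (Suc j)"
proof -
  have p0: "p > 0"
    using assms by simp
  obtain e where de: "d = p*e"
    using assms(1) by blast
  define X where "X = p - Suc j"
  define g where "g = j*e div p"
  define g' where "g' = Suc j*e div p"
  define q where "q = j*d div p"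
  define q' where "q' = Suc j*d div p"
  have q: "q = j*e" and q': "q' = Suc j*e"
    unfolding q_def q'_def de using p0 by simp_all
  have quot_q: "(d*x + q) div p = e*x + g" for x
  proof -
    have "d*x + q = j*e + p*(e*x)"
      unfolding de q by (simp add: algebra_simps)
    thus ?thesis using p0 unfolding g_def by simp
  qed
  have quot_q': "(d*x + q') div p = e*x + g'" for x
  proof -
    have "d*x + q' = Suc j*e + p*(e*x)"
      unfolding de q' by (simp add: algebra_simps)
    thus ?thesis using p0 unfolding g'_def by simp
  qed
  have "(\<Sum>x<X. int ((d*x + q) div p)) - (\<Sum>x<X. int ((d*x + q') div p)) = int X * (int g - int g')"
    unfolding quot_q quot_q' sum_subtractf[symmetric] by (simp add: algebra_simps)
  moreover have "int ((d*X + q) div p) = int e * int X + int g"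
    unfolding quot_q by simp
  moreover have "int e * int X + (int X + 1) * int g \<ge> int e * int j + int X * int g'"
    by (rule floor_multiple_increment_bound[of "int j" "int p"])
      (use assms int_div_bounds[OF p0, of "j*e"] int_div_bounds[OF p0, of "Suc j*e"] in
        \<open>auto simp: X_def g_def g'_def of_nat_diff algebra_simps\<close>)
  ultimately have "int ((d*X + q) div p) + (\<Sum>x<X. int ((d*x + q) div p))
       - (\<Sum>x<X. int ((d*x + q') div p)) - int q \<ge> 0"
    unfolding q by (simp add: algebra_simps)
  thus ?thesis
    using Lsum_Suc_eq[of j p d] assms unfolding q_def q'_def X_def by simp
qed

lemma Lsum_le_Suc:
  fixes p d j :: nat
  assumes "prime p" "1 \<le> j" "2*j+3 \<le> p"
  shows "Lsum p d j \<le> Lsum p d (Suc j)"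
  using Lsum_le_Suc_of_dvd Lsum_le_Suc_of_not_dvd assms by blast

lemma Lsum_Suc_le:
  fixes p d j :: nat
  assumes "Suc j < p" "p + 1 \<le> 2*j"
  shows "Lsum p d (Suc j) \<le> Lsum p d j"
proof -
  have p0: "p > 0"
    using assms by simp
  define q where "q = j*d div p"
  define q' where "q' = Suc j*d div p"
  define X where "X = p - Suc j"
  have "q \<le> q'"
    unfolding q_def q'_def by (intro div_le_mono) simp
  hence "(\<Sum>x<X. int ((d*x + q) div p)) \<le> (\<Sum>x<X. int ((d*x + q') div p))"
    by (intro sum_mono) (simp add: div_le_mono)
  moreover have "(d*X + q) div p \<le> q"
  proof -
    have "(2*int p - 1)*(2*int j) \<ge> (2*int p - 1)*(int p + 1)"
      using assms by (intro mult_left_mono) auto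
    hence "int p * int X \<le> (int p - 1) * int j"
      using assms unfolding X_def by (simp add: of_nat_diff algebra_simps)
    hence "int p * (int d * int X) \<le> (int p - 1) * (int j * int d)"
      using mult_left_mono[of "int p * int X" "(int p - 1) * int j" "int d"]
      by (simp add: algebra_simps)
    moreover have "(int p - 1) * (int j * int d) < (int p - 1) * (int p * int q + int p)"
      using assms int_div_bounds[OF p0, of "j*d"] unfolding q_def
      by (intro mult_strict_left_mono) auto
    moreover have "(int p - 1) * (int p * int q + int p) = int p * ((int p - 1) * (int q + 1))"
      by (simp add: algebra_simps)
    ultimately have "int p * (int d * int X) < int p * ((int p - 1) * (int q + 1))"
      by linarith
    hence "int d * int X < (int p - 1) * (int q + 1)"
      using p0 by (simp add: mult_less_cancel_left_pos)
    hence "int d * int X + int q < int p * (int q + 1)"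
      by (simp add: algebra_simps)
    hence "int (d*X + q) < int ((q+1)*p)"
      by (simp add: algebra_simps)
    hence "d*X + q < (q+1)*p"
      by (simp only: of_nat_less_iff)
    from less_mult_imp_div_less[OF this] show ?thesis
      by simp
  qed
  ultimately show ?thesis
    using Lsum_Suc_eq[of j p d] assms unfolding q_def q'_def X_def by simp
qed

lemma Lsum_max_at_middle:
  fixes p m d :: nat
  assumes "prime p" "p = 2*m + 1"
  obtains j0 where "j0 \<in> {m, Suc m}" "\<And>j. j \<in> {1..p-1} \<Longrightarrow> Lsum p d j \<le> Lsum p d j0"
proof -
  have up: "Lsum p d j \<le> Lsum p d k" if "1 \<le> j" "j \<le> k" "k \<le> m" for j k
    using that(2,3)
  proof (induction k rule: dec_induct)
    case (step k)
    thus ?case using Lsum_le_Suc[OF assms(1), of k d] that(1) assms(2) by simp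
  qed simp
  have down: "Lsum p d k \<le> Lsum p d j" if "Suc m \<le> j" "j \<le> k" "k \<le> p-1" for j k
    using that(2,3)
  proof (induction k rule: dec_induct)
    case (step k)
    thus ?case using Lsum_Suc_le[of k p d] that(1) assms(2) by simp
  qed simp
  define j0 where "j0 = (if Lsum p d (Suc m) \<le> Lsum p d m then m else Suc m)"
  show thesis
  proof
    show "j0 \<in> {m, Suc m}"
      unfolding j0_def by simp
    fix j assume "j \<in> {1..p-1}"
    thus "Lsum p d j \<le> Lsum p d j0"
      using up[of j m] down[of "Suc m" j] assms(2) unfolding j0_def
      by (cases "j \<le> m") auto
  qed
qed

theorem mainTheorem3:
  fixes p d :: nat
  assumes "prime p" and "odd p" and "d > 0"
  shows "L p (d + p^2) = L p d + L p (p^2 + 1)"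
proof -
  obtain m where p: "p = 2*m + 1"
    using assms(2) oddE by blast
  have p0: "p > 0" and "m \<ge> 1"
    using p prime_ge_2_nat[OF assms(1)] by auto
  obtain j0 where j0: "j0 \<in> {m, Suc m}"
    and Lsum_max: "\<And>j. j \<in> {1..p-1} \<Longrightarrow> Lsum p d j \<le> Lsum p d j0"
    using Lsum_max_at_middle[OF assms(1) p] by blast
  have j0_range: "j0 \<in> {1..p-1}"
    using j0 p \<open>m \<ge> 1\<close> by auto
  have gain_le_gain_j0: "int ((p-1)*j*(p-j)) \<le> int ((p-1)*j0*(p-j0))" if "j \<in> {1..p-1}" for j
    unfolding of_nat_le_iff by (rule mult_complement_le_middle[OF p j0]) (use that in auto)
  have shifted: "Lsum p (c + p^2) j = Lsum p c j + int ((p-1)*j*(p-j))" if "j \<in> {1..p-1}" for c j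
    using Lsum_add_p_square[OF p0] that by auto
  have shifted_max: "Lsum p (c + p^2) j \<le> Lsum p (c + p^2) j0"
    if "j \<in> {1..p-1}" "Lsum p c j \<le> Lsum p c j0" for c j
    using shifted[OF that(1), of c] shifted[OF j0_range, of c] gain_le_gain_j0[OF that(1)] that(2)
    by linarith
  have "L p d = Lsum p d j0"
    by (rule L_eq_Lsum_at_maximiser[OF p0 j0_range Lsum_max])
  moreover have "L p (1 + p^2) = Lsum p (1 + p^2) j0"
    by (intro L_eq_Lsum_at_maximiser[OF p0 j0_range] shifted_max) (simp_all only: Lsum_one order_refl)
  moreover have "L p (d + p^2) = Lsum p (d + p^2) j0"
    by (intro L_eq_Lsum_at_maximiser[OF p0 j0_range] shifted_max Lsum_max)
  ultimately show ?thesis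
    using shifted[OF j0_range, of d] shifted[OF j0_range, of 1] Lsum_one[of p j0] by (simp add: add.commute)
qed

end
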